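(* Let $w\ge 2$, $h\ge 3$ and $G=P_w(U)\sqcap C_h$. (1) If $U=\{1\}$ or $U=\{w\}$, then $Z(G)\le\lceil h/2\rceil$. (2) If $U=\{i\}$ with $1<i<w$, then $Z(G)\le h$.
   Context: All graphs are finite, simple and undirected. Zero forcing: given a graph $G$ and a set $S\subseteq V(G)$ of initially filled vertices, the color change rule says that if a filled vertex $v$ has exactly one unfilled neighbor $u$, then $v$ forces $u$ to become filled. $S$ is a zero forcing set if repeatedly applying this rule eventually fills every vertex of $G$. The zero forcing number $Z(G)$ is the minimum cardinality of a zero forcing set of $G$. The path $P_n$ has vertex set $\{1,\dots,n\}$ and edges $\{k,k+1\}$ for $1\le k\le n-1$; the cycle $C_n$ ($n\ge3$) has vertex set $\{1,\dots,n\}$ and edges $\{k,k+1\}$ for $1\le k\le n-1$ together with $\{n,1\}$. Generalized hierarchical product: for graphs $W,H$ and $U\subseteq V(W)$ (the root set), $W(U)\sqcap H$ is the graph with vertex set $V(W)\times V(H)$ in which $(x_1,y_1)$ and $(x_2,y_2)$ are adjacent iff either ($x_1=x_2\in U$ and $y_1y_2\in E(H)$) or ($y_1=y_2$ and $x_1x_2\in E(W)$). *)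

theory Defs
  imports Complex_Main
begin

text \<open>A finite simple graph is given by a vertex set and a symmetric irreflexive
adjacency relation; only adjacencies between vertices of the vertex set matter.\<close>

type_synonym 'a graph = "'a set \<times> ('a \<Rightarrow> 'a \<Rightarrow> bool)"

definition verts :: "'a graph \<Rightarrow> 'a set" where "verts G = fst G"
definition adj :: "'a graph \<Rightarrow> 'a \<Rightarrow> 'a \<Rightarrow> bool" where "adj G = snd G"

inductive_set filled :: "'a graph \<Rightarrow> 'a set \<Rightarrow> 'a set" for G S where
  init: "v \<in> S \<Longrightarrow> v \<in> filled G S"
| force: "\<lbrakk> v \<in> filled G S; u \<in> verts G; adj G v u;
            \<forall>x\<in>verts G. adj G v x \<and> x \<noteq> u \<longrightarrow> x \<in> filled G S \<rbrakk>
          \<Longrightarrow> u \<in> filled G S"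

definition zero_forcing_set :: "'a graph \<Rightarrow> 'a set \<Rightarrow> bool" where
  "zero_forcing_set G S \<longleftrightarrow> S \<subseteq> verts G \<and> verts G \<subseteq> filled G S"

definition zero_forcing_number :: "'a graph \<Rightarrow> nat" where
  "zero_forcing_number G = Min (card ` {S. zero_forcing_set G S})"

definition path_graph :: "nat \<Rightarrow> nat graph" where
  "path_graph n = ({1..n}, \<lambda>x y. y = x + 1 \<or> x = y + 1)"

definition cycle_graph :: "nat \<Rightarrow> nat graph" where
  "cycle_graph n = ({1..n}, \<lambda>x y. y = x + 1 \<or> x = y + 1 \<or> (x = n \<and> y = 1) \<or> (x = 1 \<and> y = n))"

definition hier_prod :: "'a graph \<Rightarrow> 'a set \<Rightarrow> 'b graph \<Rightarrow> ('a \<times> 'b) graph" where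
  "hier_prod W U H = (verts W \<times> verts H,
     \<lambda>(x1, y1) (x2, y2). (x1 = x2 \<and> x1 \<in> U \<and> adj H y1 y2) \<or> (y1 = y2 \<and> adj W x1 x2))"

end

theory Submission imports Defs begin

text \<open>Write the product as a grid of columns \<open>x \<in> {1..w}\<close> (copies of the cycle) and rows
\<open>y \<in> {1..h}\<close> (copies of the path); only root columns carry cycle edges. For \<open>U = {1}\<close>, fill
column \<open>w\<close> on row \<open>1\<close> and on the even rows below \<open>h\<close>, i.e. \<open>\<lceil>h/2\<rceil>\<close> vertices. Each of these
rows is forced leftwards, since non-root vertices have degree at most two. Now the root
column \<open>1\<close> carries a cycle in which every other vertex is filled and all path neighbours
of those vertices are filled too, so the cycle gets forced completely; afterwards the
columns are forced rightwards one by one. The case \<open>U = {w}\<close> is the mirror image under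
\<open>x \<mapsto> w + 1 - x\<close>. For an inner root a single full end column already forces the grid.\<close>

abbreviation path_cycle_prod :: "nat \<Rightarrow> nat set \<Rightarrow> nat \<Rightarrow> (nat \<times> nat) graph" where
  "path_cycle_prod w U h \<equiv> hier_prod (path_graph w) U (cycle_graph h)"

lemma verts_path_cycle_prod [simp]: "verts (path_cycle_prod w U h) = {1..w} \<times> {1..h}"
  by (simp add: hier_prod_def verts_def path_graph_def cycle_graph_def)

lemma adj_path_cycle_prod [simp]:
  "adj (path_cycle_prod w U h) (x1, y1) (x2, y2) \<longleftrightarrow>
     (x1 = x2 \<and> x1 \<in> U \<and> (y2 = y1 + 1 \<or> y1 = y2 + 1 \<or> (y1 = h \<and> y2 = 1) \<or> (y1 = 1 \<and> y2 = h)))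
     \<or> (y1 = y2 \<and> (x2 = x1 + 1 \<or> x1 = x2 + 1))"
  by (simp add: hier_prod_def adj_def path_graph_def cycle_graph_def)

lemma zero_forcing_number_le:
  assumes "zero_forcing_set G S" "finite (verts G)"
  shows "zero_forcing_number G \<le> card S"
proof -
  have "{S. zero_forcing_set G S} \<subseteq> Pow (verts G)" by (auto simp: zero_forcing_set_def)
  then have "finite {S. zero_forcing_set G S}" using assms(2) finite_subset by blast
  then show ?thesis unfolding zero_forcing_number_def using assms(1) by (simp add: Min_le)
qed

lemma filled_in_verts: "v \<in> filled G S \<Longrightarrow> S \<subseteq> verts G \<Longrightarrow> v \<in> verts G"
  by (induction rule: filled.induct) auto

lemma filled_forceI:
  assumes "v \<in> filled G S" "u \<in> verts G" "adj G v u"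
    and "\<And>z. z \<in> verts G \<Longrightarrow> adj G v z \<Longrightarrow> z \<noteq> u \<Longrightarrow> z \<in> filled G S"
  shows "u \<in> filled G S"
  using assms(4) by (intro filled.force[OF assms(1-3)]) blast

lemma filled_image_iso:
  assumes bij: "bij_betw f (verts G) (verts H)"
    and adj: "\<And>a b. a \<in> verts G \<Longrightarrow> b \<in> verts G \<Longrightarrow> adj H (f a) (f b) \<longleftrightarrow> adj G a b"
    and S: "S \<subseteq> verts G"
  shows "f ` filled G S \<subseteq> filled H (f ` S)"
proof clarify
  fix v assume "v \<in> filled G S"
  then show "f v \<in> filled H (f ` S)"
  proof (induction rule: filled.induct)
    case (init v)
    then show ?case by (blast intro: filled.init)
  next
    case (force v u)
    have v: "v \<in> verts G" using force.hyps(1) S by (rule filled_in_verts)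
    show ?case
    proof (rule filled.force[OF force.IH(1)])
      show "f u \<in> verts H" using force.hyps(2) bij bij_betwE by blast
      show "adj H (f v) (f u)" using force.hyps(2,3) v adj by blast
      show "\<forall>x\<in>verts H. adj H (f v) x \<and> x \<noteq> f u \<longrightarrow> x \<in> filled H (f ` S)"
      proof clarify
        fix x assume x: "x \<in> verts H" "adj H (f v) x" "x \<noteq> f u"
        obtain x' where x': "x' \<in> verts G" "x = f x'"
          using x(1) bij by (auto simp: bij_betw_def)
        have "adj G v x'" using x(2) adj[OF v x'(1)] x'(2) by simp
        moreover have "x' \<noteq> u" using x(3) x'(2) by blast
        ultimately show "x \<in> filled H (f ` S)" using force.IH(2) x' by blast
      qed
    qed
  qed
qed

lemma zero_forcing_set_image_iso:
  assumes bij: "bij_betw f (verts G) (verts H)"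
    and adj: "\<And>a b. a \<in> verts G \<Longrightarrow> b \<in> verts G \<Longrightarrow> adj H (f a) (f b) \<longleftrightarrow> adj G a b"
    and zf: "zero_forcing_set G S"
  shows "zero_forcing_set H (f ` S)"
proof -
  have S: "S \<subseteq> verts G" using zf by (simp add: zero_forcing_set_def)
  have "verts H = f ` verts G" using bij by (simp add: bij_betw_def)
  also have "\<dots> \<subseteq> f ` filled G S" using zf by (auto simp: zero_forcing_set_def)
  also have "\<dots> \<subseteq> filled H (f ` S)" by (rule filled_image_iso[OF bij adj S])
  finally show ?thesis
    using S bij by (auto simp: zero_forcing_set_def bij_betw_def)
qed

lemma adj_path_cycle_prod_cases:
  "adj (path_cycle_prod w U h) (x1, y1) (x2, y2) \<Longrightarrow>
     x2 = x1 \<or> (y2 = y1 \<and> (x2 = x1 + 1 \<or> x1 = x2 + 1))"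
  by auto

lemma adj_path_cycle_prod_non_root:
  "x1 \<notin> U \<Longrightarrow> adj (path_cycle_prod w U h) (x1, y1) (x2, y2) \<Longrightarrow>
     y2 = y1 \<and> (x2 = x1 + 1 \<or> x1 = x2 + 1)"
  by auto

lemma filled_columns_from_first:
  assumes col1: "\<forall>y\<in>{1..h}. (1, y) \<in> filled (path_cycle_prod w U h) S"
  shows "{1..w} \<times> {1..h} \<subseteq> filled (path_cycle_prod w U h) S"
proof -
  let ?F = "filled (path_cycle_prod w U h) S"
  have "\<forall>x'\<in>{1..min x w}. \<forall>y\<in>{1..h}. (x', y) \<in> ?F" for x
  proof (induction x)
    case (Suc x)
    have next_col: "(Suc x, y) \<in> ?F" if "Suc x \<le> w" "y \<in> {1..h}" for y
    proof (cases "x = 0")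
      case False
      then have "x \<in> {1..min x w}" using that by auto
      then have filled_xy: "(x, y) \<in> ?F" using Suc.IH that(2) by blast
      show ?thesis
      proof (rule filled_forceI[OF filled_xy])
        fix z assume z: "z \<in> verts (path_cycle_prod w U h)"
          "adj (path_cycle_prod w U h) (x, y) z" "z \<noteq> (Suc x, y)"
        obtain a b where ab: "z = (a, b)" by (cases z)
        have "a = x \<or> a + 1 = x"
          using z(2,3) adj_path_cycle_prod_cases[of w U h x y a b] unfolding ab by auto
        then have "a \<in> {1..min x w}" "b \<in> {1..h}" using z(1) unfolding ab by auto
        then show "z \<in> ?F" using Suc.IH unfolding ab by blast
      qed (use that in simp_all)
    qed (use that col1 in simp)
    show ?case
    proof (intro ballI)
      fix x' y assume x': "x' \<in> {1..min (Suc x) w}" and y: "y \<in> {1..h}"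
      show "(x', y) \<in> ?F"
      proof (cases "x' = Suc x")
        case False
        then have "x' \<in> {1..min x w}" using x' by auto
        then show ?thesis using Suc.IH y by blast
      qed (use next_col x' y in simp)
    qed
  qed simp
  then show ?thesis by auto
qed

lemma filled_row_leftwards:
  assumes U: "U \<subseteq> {1}" and y: "y \<in> {1..h}"
    and start: "(w, y) \<in> filled (path_cycle_prod w U h) S"
    and x: "x \<in> {1..w}"
  shows "(x, y) \<in> filled (path_cycle_prod w U h) S"
proof -
  let ?F = "filled (path_cycle_prod w U h) S"
  have "\<forall>x'\<in>{w - d..w}. x' \<ge> 1 \<longrightarrow> (x', y) \<in> ?F" for d
  proof (induction d)
    case (Suc d)
    let ?x = "w - d"
    have step: "(?x - 1, y) \<in> ?F" if "2 \<le> ?x"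
    proof -
      have filled_xy: "(?x, y) \<in> ?F" using Suc.IH that by simp
      have non_root: "?x \<notin> U" using U that by auto
      show ?thesis
      proof (rule filled_forceI[OF filled_xy])
        fix z assume z: "z \<in> verts (path_cycle_prod w U h)"
          "adj (path_cycle_prod w U h) (?x, y) z" "z \<noteq> (?x - 1, y)"
        obtain a b where ab: "z = (a, b)" by (cases z)
        have "b = y" "a = ?x + 1"
          using z(2,3) adj_path_cycle_prod_non_root[OF non_root, of w h y a b] unfolding ab by auto
        then show "z \<in> ?F" using Suc.IH z(1) unfolding ab by auto
      qed (use that y in auto)
    qed
    show ?case
    proof (intro ballI impI)
      fix x' assume x': "x' \<in> {w - Suc d..w}" "1 \<le> x'"
      show "(x', y) \<in> ?F"
      proof (cases "x' \<in> {w - d..w}")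
        case True
        then show ?thesis using Suc.IH x'(2) by blast
      next
        case False
        then have "x' = ?x - 1" "2 \<le> ?x" using x' by auto
        then show ?thesis using step by simp
      qed
    qed
  qed (use start in auto)
  from this[of "w - x"] show ?thesis using x by auto
qed

definition cycle_seed :: "nat \<Rightarrow> nat set" where
  "cycle_seed h = insert 1 ((\<lambda>k. 2 * k) ` {1..(h - 1) div 2})"

lemma even_mem_cycle_seed: "even y \<Longrightarrow> 2 \<le> y \<Longrightarrow> y < h \<Longrightarrow> y \<in> cycle_seed h"
  by (auto simp: cycle_seed_def elim!: evenE)

lemma cycle_seed_subset: "h \<ge> 1 \<Longrightarrow> cycle_seed h \<subseteq> {1..h}"
  by (auto simp: cycle_seed_def)

lemma card_cycle_seed:
  assumes "h \<ge> 1"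
  shows "int (card (cycle_seed h)) = \<lceil>real h / 2\<rceil>"
proof -
  have "card (cycle_seed h) = Suc ((h - 1) div 2)"
    unfolding cycle_seed_def by (subst card_insert_disjoint) (auto simp: card_image inj_on_def)
  also have "int \<dots> = \<lceil>real h / 2\<rceil>"
    using assms by (simp add: ceiling_eq_iff) linarith
  finally show ?thesis .
qed

lemma filled_root_cycle:
  assumes h: "h \<ge> 3" and c: "c \<in> U" "c \<in> {1..w}"
    and rows: "{1..w} \<times> cycle_seed h \<subseteq> filled (path_cycle_prod w U h) S"
  shows "\<forall>y\<in>{1..h}. (c, y) \<in> filled (path_cycle_prod w U h) S"
proof -
  let ?F = "filled (path_cycle_prod w U h) S"
  have row: "\<forall>x\<in>{1..w}. (x, y) \<in> ?F" if "y \<in> cycle_seed h" for y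
    using rows that by blast
  have row1: "\<forall>x\<in>{1..w}. (x, 1) \<in> ?F" by (rule row) (simp add: cycle_seed_def)
  have odd: "(c, 2 * k + 1) \<in> ?F" if "2 * k + 1 < h" for k
    using that
  proof (induction k)
    case 0
    then show ?case using row1 c(2) by simp
  next
    case (Suc k)
    have seed: "\<forall>x\<in>{1..w}. (x, 2 * k + 2) \<in> ?F"
      using Suc.prems by (intro row even_mem_cycle_seed) auto
    have below: "(c, 2 * k + 1) \<in> ?F" using Suc by simp
    show ?case
    proof (rule filled_forceI[where v = "(c, 2 * k + 2)"])
      fix z assume "z \<in> verts (path_cycle_prod w U h)"
        "adj (path_cycle_prod w U h) (c, 2 * k + 2) z" "z \<noteq> (c, 2 * Suc k + 1)"
      then have "z = (c, 2 * k + 1) \<or> (fst z \<in> {1..w} \<and> snd z = 2 * k + 2)"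
        using Suc.prems by (cases z) auto
      then show "z \<in> ?F" using below seed by (cases z) auto
    qed (use Suc.prems c seed in auto)
  qed
  have row2: "\<forall>x\<in>{1..w}. (x, 2) \<in> ?F"
    using h by (intro row even_mem_cycle_seed) auto
  have top: "(c, h) \<in> ?F"
    \<comment> \<open>\<open>(c, 1)\<close> forces \<open>(c, h)\<close> across the edge closing the cycle\<close>
  proof (rule filled_forceI[where v = "(c, 1)"])
    fix z assume "z \<in> verts (path_cycle_prod w U h)"
      "adj (path_cycle_prod w U h) (c, 1) z" "z \<noteq> (c, h)"
    then have "fst z \<in> {1..w} \<and> snd z \<in> {1, 2}" using h by (cases z) auto
    then show "z \<in> ?F" using row1 row2 by (cases z) auto
  qed (use h c row1 in auto)
  show ?thesis
  proof
    fix y assume y: "y \<in> {1..h}"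
    show "(c, y) \<in> ?F"
    proof (cases "y = h")
      case False
      then have "y < h" using y by simp
      show ?thesis
      proof (cases "even y")
        case True
        then have "y \<noteq> 1" by auto
        then have "2 \<le> y" using y by simp
        have "y \<in> cycle_seed h" using True \<open>2 \<le> y\<close> \<open>y < h\<close> by (rule even_mem_cycle_seed)
        then show ?thesis using c(2) row by blast
      next
        case False
        then obtain k where "y = 2 * k + 1" by (rule oddE)
        then show ?thesis using odd \<open>y < h\<close> by simp
      qed
    qed (use top in simp)
  qed
qed

lemma zero_forcing_set_first_root:
  assumes "w \<ge> 1" "h \<ge> 3"
  shows "zero_forcing_set (path_cycle_prod w {1} h) ({w} \<times> cycle_seed h)"
proof -
  let ?G = "path_cycle_prod w {1} h" and ?S = "{w} \<times> cycle_seed h"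
  have "{1..w} \<times> cycle_seed h \<subseteq> filled ?G ?S"
  proof clarify
    fix x y assume x: "x \<in> {1..w}" and y: "y \<in> cycle_seed h"
    have "(w, y) \<in> filled ?G ?S" using y by (blast intro: filled.init)
    moreover have "y \<in> {1..h}" using y cycle_seed_subset[of h] assms(2) by auto
    ultimately show "(x, y) \<in> filled ?G ?S" using filled_row_leftwards[of "{1}"] x by blast
  qed
  then have "\<forall>y\<in>{1..h}. (1, y) \<in> filled ?G ?S"
    using filled_root_cycle[of h 1 "{1}" w] assms by auto
  then have "{1..w} \<times> {1..h} \<subseteq> filled ?G ?S" by (rule filled_columns_from_first)
  moreover have "?S \<subseteq> {1..w} \<times> {1..h}" using cycle_seed_subset[of h] assms by auto
  ultimately show ?thesis by (simp add: zero_forcing_set_def)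
qed

lemma zero_forcing_set_first_column:
  assumes "w \<ge> 1"
  shows "zero_forcing_set (path_cycle_prod w U h) ({1} \<times> {1..h})"
  using assms filled_columns_from_first[of h w U "{1} \<times> {1..h}"]
  by (auto simp: zero_forcing_set_def intro: filled.init)

lemma zero_forcing_set_mirror:
  assumes U: "U \<subseteq> {1..w}" and zf: "zero_forcing_set (path_cycle_prod w U h) S"
  shows "zero_forcing_set (path_cycle_prod w ((\<lambda>x. Suc w - x) ` U) h)
           ((\<lambda>(x, y). (Suc w - x, y)) ` S)"
proof (rule zero_forcing_set_image_iso[OF _ _ zf])
  show "bij_betw (\<lambda>(x, y). (Suc w - x, y)) (verts (path_cycle_prod w U h))
          (verts (path_cycle_prod w ((\<lambda>x. Suc w - x) ` U) h))"
    by (rule bij_betw_byWitness[where f' = "\<lambda>(x, y). (Suc w - x, y)"]) auto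
next
  fix a b assume "a \<in> verts (path_cycle_prod w U h)" "b \<in> verts (path_cycle_prod w U h)"
  then obtain x1 y1 x2 y2 where ab: "a = (x1, y1)" "b = (x2, y2)"
    and x: "x1 \<in> {1..w}" "x2 \<in> {1..w}"
    by (cases a, cases b) auto
  have "x1 = x" if "x \<in> U" "Suc w - x1 = Suc w - x" for x
    using that x(1) subsetD[OF U \<open>x \<in> U\<close>] by auto
  then have root: "Suc w - x1 \<in> (\<lambda>x. Suc w - x) ` U \<longleftrightarrow> x1 \<in> U" by blast
  have same: "Suc w - x1 = Suc w - x2 \<longleftrightarrow> x1 = x2"
    and up: "Suc w - x2 = Suc w - x1 + 1 \<longleftrightarrow> x1 = x2 + 1"
    and down: "Suc w - x1 = Suc w - x2 + 1 \<longleftrightarrow> x2 = x1 + 1"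
    using x by auto
  show "adj (path_cycle_prod w ((\<lambda>x. Suc w - x) ` U) h) ((\<lambda>(x, y). (Suc w - x, y)) a)
          ((\<lambda>(x, y). (Suc w - x, y)) b) \<longleftrightarrow> adj (path_cycle_prod w U h) a b"
    unfolding ab prod.case adj_path_cycle_prod root same up down by blast
qed

theorem mainTheorem8:
  fixes w h i :: nat and U :: "nat set"
  assumes "w \<ge> 2" and "h \<ge> 3"
  shows "(U = {1} \<or> U = {w} \<longrightarrow>
            int (zero_forcing_number (hier_prod (path_graph w) U (cycle_graph h)))
              \<le> \<lceil>real h / 2\<rceil>)
       \<and> (1 < i \<and> i < w \<longrightarrow>
            zero_forcing_number (hier_prod (path_graph w) {i} (cycle_graph h)) \<le> h)"
proof (intro conjI impI)
  let ?S = "{w} \<times> cycle_seed h" and ?mirror = "\<lambda>(x, y). (Suc w - x, y)"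
  have zf1: "zero_forcing_set (path_cycle_prod w {1} h) ?S"
    using assms by (intro zero_forcing_set_first_root) auto
  have zfw: "zero_forcing_set (path_cycle_prod w {w} h) (?mirror ` ?S)"
    using zero_forcing_set_mirror[OF _ zf1] assms by simp
  have "card (?mirror ` ?S) = card ?S"
    by (rule card_image) (auto simp: inj_on_def)
  moreover assume "U = {1} \<or> U = {w}"
  ultimately have "zero_forcing_number (path_cycle_prod w U h) \<le> card ?S"
    using zero_forcing_number_le[OF zf1] zero_forcing_number_le[OF zfw] by auto
  then show "int (zero_forcing_number (path_cycle_prod w U h)) \<le> \<lceil>real h / 2\<rceil>"
    using card_cycle_seed[of h] assms by (simp add: card_cartesian_product)
next
  show "zero_forcing_number (path_cycle_prod w {i} h) \<le> h"
    using zero_forcing_number_le[OF zero_forcing_set_first_column] assms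
    by (simp add: card_cartesian_product)
qed

end
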